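(* Fix $n\ge d+1$ and a realization for which $S_n$ is positive definite. Then \[ \lim_{\gamma\to\infty}\gamma^{2+d/2}\,\frac{16\,T_{n,\gamma}}{n\,\pi^{d/2}}=2b_{1,d}+\widetilde b_{1,d}, \] where \[ b_{1,d}=\frac{1}{n^2}\sum_{j,k=1}^n (Y_{n,j}^\top Y_{n,k})^3,\qquad \widetilde b_{1,d}=\frac{1}{n^2}\sum_{j,k=1}^n Y_{n,j}^\top Y_{n,k}\,\|Y_{n,j}\|^2\,\|Y_{n,k}\|^2 . \]
   Context: Let $X_1,\dots,X_n$ be points of $\mathbb{R}^d$ (realizations of i.i.d. absolutely continuous random vectors). Put $\overline{X}_n=n^{-1}\sum_{j=1}^n X_j$, $S_n=n^{-1}\sum_{j=1}^n (X_j-\overline{X}_n)(X_j-\overline{X}_n)^\top$, let $S_n^{-1/2}$ be the symmetric positive definite square root of $S_n^{-1}$, and $Y_{n,j}=S_n^{-1/2}(X_j-\overline{X}_n)$. Let $M_n(t)=n^{-1}\sum_{j=1}^n \exp(t^\top Y_{n,j})$ with gradient $M_n'$, $w_\gamma(t)=\exp(-\gamma\|t\|^2)$, and $T_{n,\gamma}=n\int_{\mathbb{R}^d}\|M_n'(t)-tM_n(t)\|^2w_\gamma(t)\,\mathrm{d}t$. *)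

theory Defs
  imports "HOL-Analysis.Analysis"
begin

text \<open>Points X_1,...,X_n of R^d are modelled as X :: nat => real^'d, indices 1..n.\<close>

definition outer :: "real^'d \<Rightarrow> real^'d \<Rightarrow> real^'d^'d" where
  "outer v w = (\<chi> i k. v $ i * w $ k)"

definition posdef :: "real^'d^'d \<Rightarrow> bool" where
  "posdef A \<longleftrightarrow> transpose A = A \<and> (\<forall>x. x \<noteq> 0 \<longrightarrow> x \<bullet> (A *v x) > 0)"

definition sample_mean :: "nat \<Rightarrow> (nat \<Rightarrow> real^'d) \<Rightarrow> real^'d" where
  "sample_mean n X = (1 / real n) *\<^sub>R (\<Sum>j=1..n. X j)"

definition sample_cov :: "nat \<Rightarrow> (nat \<Rightarrow> real^'d) \<Rightarrow> real^'d^'d" where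
  "sample_cov n X = (1 / real n) *\<^sub>R
     (\<Sum>j=1..n. outer (X j - sample_mean n X) (X j - sample_mean n X))"

definition inv_sqrt :: "real^'d^'d \<Rightarrow> real^'d^'d" where
  "inv_sqrt S = (THE R. posdef R \<and> R ** R = matrix_inv S)"

definition scaled_res :: "nat \<Rightarrow> (nat \<Rightarrow> real^'d) \<Rightarrow> nat \<Rightarrow> real^'d" where
  "scaled_res n X j = inv_sqrt (sample_cov n X) *v (X j - sample_mean n X)"

definition emp_mgf :: "nat \<Rightarrow> (nat \<Rightarrow> real^'d) \<Rightarrow> real^'d \<Rightarrow> real" where
  "emp_mgf n X t = (1 / real n) * (\<Sum>j=1..n. exp (t \<bullet> scaled_res n X j))"

definition grad :: "(real^'d \<Rightarrow> real) \<Rightarrow> real^'d \<Rightarrow> real^'d" where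
  "grad f t = (THE g. (f has_derivative (\<lambda>h. g \<bullet> h)) (at t))"

definition test_stat :: "nat \<Rightarrow> (nat \<Rightarrow> real^'d) \<Rightarrow> real \<Rightarrow> real" where
  "test_stat n X \<gamma> = real n * integral UNIV
     (\<lambda>t::real^'d. (norm (grad (emp_mgf n X) t - emp_mgf n X t *\<^sub>R t))\<^sup>2 * exp (- \<gamma> * (norm t)\<^sup>2))"

definition b1 :: "nat \<Rightarrow> (nat \<Rightarrow> real^'d) \<Rightarrow> real" where
  "b1 n X = (1 / (real n)\<^sup>2) * (\<Sum>j=1..n. \<Sum>k=1..n. (scaled_res n X j \<bullet> scaled_res n X k) ^ 3)"

definition b1_tilde :: "nat \<Rightarrow> (nat \<Rightarrow> real^'d) \<Rightarrow> real" where
  "b1_tilde n X = (1 / (real n)\<^sup>2) * (\<Sum>j=1..n. \<Sum>k=1..n.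
      (scaled_res n X j \<bullet> scaled_res n X k) * (norm (scaled_res n X j))\<^sup>2 * (norm (scaled_res n X k))\<^sup>2)"

end

theory Submission
  imports Defs "HOL-Probability.Probability" "HOL-Real_Asymp.Real_Asymp"
begin

text \<open>
  With \<open>a = Y\<^sub>j + Y\<^sub>k\<close>, the integrand \<open>\<parallel>M\<^sub>n'(t) - t M\<^sub>n(t)\<parallel>\<^sup>2 e\<^bsup>-\<gamma>\<parallel>t\<parallel>\<^sup>2\<^esup>\<close> is a double sum over
  pairs \<open>(j, k)\<close> of \<open>(Y\<^sub>j\<cdot>Y\<^sub>k - t\<cdot>a + \<parallel>t\<parallel>\<^sup>2) e\<^bsup>t\<cdot>a - \<gamma>\<parallel>t\<parallel>\<^sup>2\<^esup>\<close>, and each term is an explicit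
  Gaussian integral. After normalisation the pair contributes
  \<open>16\<gamma>\<^sup>2 e\<^bsup>c/4\<gamma>\<^esup> (p + (d - c)/2\<gamma> + c/4\<gamma>\<^sup>2)\<close> with \<open>p = Y\<^sub>j\<cdot>Y\<^sub>k\<close> and \<open>c = \<parallel>a\<parallel>\<^sup>2\<close>.
  Expanding in \<open>1/\<gamma>\<close>, the coefficients of \<open>\<gamma>\<^sup>2\<close> and \<open>\<gamma>\<close> sum to zero over all pairs, because the
  scaled residuals have mean \<open>0\<close> and empirical covariance \<open>I\<close>; the constant coefficients sum to
  \<open>n\<^sup>2 (2 b1 + b1_tilde)\<close>. The identity \<open>\<Sum>\<^sub>j Y\<^sub>j Y\<^sub>j\<^sup>T = n I\<close> needs \<open>S\<^sup>-\<^sup>1\<^sup>/\<^sup>2 S S\<^sup>-\<^sup>1\<^sup>/\<^sup>2 = I\<close>,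
  which is obtained from the spectral theorem for symmetric matrices.
\<close>

section \<open>Gaussian integrals\<close>

text \<open>The value of \<open>\<integral> exp (t \<cdot> a - \<gamma> \<parallel>t\<parallel>\<^sup>2) dt\<close>, see \<open>has_bochner_integral_gauss\<close>.\<close>

definition gauss_laplace :: "real \<Rightarrow> 'a::euclidean_space \<Rightarrow> real" where
  "gauss_laplace \<gamma> a = sqrt (pi / \<gamma>) ^ DIM('a) * exp ((norm a)\<^sup>2 / (4 * \<gamma>))"

lemma norm_sq_eq_sum_Basis:
  fixes t :: "'a::euclidean_space"
  shows "(norm t)\<^sup>2 = (\<Sum>b\<in>Basis. (t \<bullet> b)\<^sup>2)"
  unfolding power2_norm_eq_inner by (subst euclidean_inner) (simp add: power2_eq_square)

lemma gauss_laplace_eq_prod_Basis: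
  fixes a :: "'a::euclidean_space"
  shows "gauss_laplace \<gamma> a = (\<Prod>b\<in>Basis. gauss_laplace \<gamma> (a \<bullet> b))"
  unfolding gauss_laplace_def prod.distrib
  by (simp add: exp_sum[symmetric] sum_divide_distrib[symmetric] norm_sq_eq_sum_Basis[of a])

lemma exp_affine_quadratic_eq_normal_density:
  assumes "\<gamma> > 0"
  shows "exp (c * x - \<gamma> * x\<^sup>2) =
    gauss_laplace \<gamma> c * normal_density (c / (2 * \<gamma>)) (sqrt (1 / (2 * \<gamma>))) x"
proof -
  have "exp (c * x - \<gamma> * x\<^sup>2) =
      exp (c\<^sup>2 / (4 * \<gamma>)) * exp (- (x - c / (2 * \<gamma>))\<^sup>2 / (2 * (sqrt (1 / (2 * \<gamma>)))\<^sup>2))"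
    unfolding exp_add[symmetric] using assms by (simp add: field_simps power2_eq_square)
  moreover have "sqrt (pi / \<gamma>) * (1 / sqrt (2 * pi * (sqrt (1 / (2 * \<gamma>)))\<^sup>2)) = 1"
    using assms by (simp add: real_sqrt_divide field_simps)
  ultimately show ?thesis
    unfolding gauss_laplace_def normal_density_def by (simp add: ac_simps)
qed

lemma has_bochner_integral_exp_affine_quadratic:
  fixes c :: real
  assumes "\<gamma> > 0"
  shows "has_bochner_integral lborel (\<lambda>x. exp (c * x - \<gamma> * x\<^sup>2)) (gauss_laplace \<gamma> c)"
proof -
  have \<sigma>: "sqrt (1 / (2 * \<gamma>)) > 0" using assms by simp
  have "has_bochner_integral lborel
      (\<lambda>x. gauss_laplace \<gamma> c * normal_density (c / (2 * \<gamma>)) (sqrt (1 / (2 * \<gamma>))) x)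
      (gauss_laplace \<gamma> c * 1)"
    using integrable_normal_density[OF \<sigma>] integral_normal_density[OF \<sigma>]
    by (intro has_bochner_integral_mult_right) (metis has_bochner_integral_integrable)
  then show ?thesis using exp_affine_quadratic_eq_normal_density[OF assms] by simp
qed

lemma has_bochner_integral_exp_affine_quadratic_moment1:
  fixes c :: real
  assumes "\<gamma> > 0"
  shows "has_bochner_integral lborel (\<lambda>x. x * exp (c * x - \<gamma> * x\<^sup>2))
    (c / (2 * \<gamma>) * gauss_laplace \<gamma> c)"
proof -
  have \<sigma>: "sqrt (1 / (2 * \<gamma>)) > 0" using assms by simp
  have "has_bochner_integral lborel
      (\<lambda>x. gauss_laplace \<gamma> c * (normal_density (c / (2 * \<gamma>)) (sqrt (1 / (2 * \<gamma>))) x * x))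
      (gauss_laplace \<gamma> c * (c / (2 * \<gamma>)))"
    by (intro has_bochner_integral_mult_right normal_moment_nz_1[OF \<sigma>])
  then show ?thesis
    unfolding exp_affine_quadratic_eq_normal_density[OF assms] by (simp add: ac_simps)
qed

lemma has_bochner_integral_exp_affine_quadratic_moment2:
  fixes c :: real
  assumes "\<gamma> > 0"
  shows "has_bochner_integral lborel (\<lambda>x. x\<^sup>2 * exp (c * x - \<gamma> * x\<^sup>2))
    ((c\<^sup>2 / (4 * \<gamma>\<^sup>2) + 1 / (2 * \<gamma>)) * gauss_laplace \<gamma> c)"
proof -
  define \<mu> where "\<mu> = c / (2 * \<gamma>)"
  define \<sigma> where "\<sigma> = sqrt (1 / (2 * \<gamma>))"
  have \<sigma>: "\<sigma> > 0" using assms by (simp add: \<sigma>_def)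
  have "has_bochner_integral lborel (\<lambda>x. normal_density \<mu> \<sigma> x * (x - \<mu>)\<^sup>2
      + 2 * \<mu> * (normal_density \<mu> \<sigma> x * x) - \<mu>\<^sup>2 * normal_density \<mu> \<sigma> x) (\<sigma>\<^sup>2 + 2 * \<mu> * \<mu> - \<mu>\<^sup>2 * 1)"
    using normal_moment_even[OF \<sigma>, where k=1 and \<mu>=\<mu>] normal_moment_nz_1[OF \<sigma>, of \<mu>]
      integrable_normal_density[OF \<sigma>] integral_normal_density[OF \<sigma>]
    by (intro has_bochner_integral_diff has_bochner_integral_add has_bochner_integral_mult_right)
      (auto simp: power2_eq_square has_bochner_integral_iff)
  then have "has_bochner_integral lborel (\<lambda>x. normal_density \<mu> \<sigma> x * x\<^sup>2) (\<sigma>\<^sup>2 + \<mu>\<^sup>2)"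
    by (simp add: power2_eq_square algebra_simps)
  then have "has_bochner_integral lborel (\<lambda>x. gauss_laplace \<gamma> c * (normal_density \<mu> \<sigma> x * x\<^sup>2))
      (gauss_laplace \<gamma> c * (\<sigma>\<^sup>2 + \<mu>\<^sup>2))"
    by (rule has_bochner_integral_mult_right)
  moreover have "\<sigma>\<^sup>2 + \<mu>\<^sup>2 = c\<^sup>2 / (4 * \<gamma>\<^sup>2) + 1 / (2 * \<gamma>)"
    using assms by (simp add: \<sigma>_def \<mu>_def power2_eq_square field_simps)
  ultimately show ?thesis
    unfolding exp_affine_quadratic_eq_normal_density[OF assms] by (simp add: \<mu>_def \<sigma>_def ac_simps)
qed

lemma has_bochner_integral_lborel_prod_Basis:
  fixes f :: "'a::euclidean_space \<Rightarrow> real \<Rightarrow> real"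
  assumes "\<And>b. b \<in> Basis \<Longrightarrow> integrable lborel (f b)"
  shows "has_bochner_integral lborel (\<lambda>x::'a. \<Prod>b\<in>Basis. f b (x \<bullet> b))
    (\<Prod>b\<in>Basis. integral\<^sup>L lborel (f b))"
proof -
  interpret product_sigma_finite "\<lambda>_::'a. lborel :: real measure"
    by standard
  define \<phi> where "\<phi> = (\<lambda>g::'a \<Rightarrow> real. \<Sum>b\<in>Basis. g b *\<^sub>R b)"
  have [measurable]: "\<phi> \<in> measurable (\<Pi>\<^sub>M b\<in>Basis. lborel) borel"
    unfolding \<phi>_def by measurable
  have [measurable]: "\<And>b. b \<in> Basis \<Longrightarrow> f b \<in> borel_measurable borel"
    using assms by (simp add: borel_measurable_integrable)
  have [measurable]: "(\<lambda>x::'a. \<Prod>b\<in>Basis. f b (x \<bullet> b)) \<in> borel_measurable borel"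
    by measurable
  have coords: "(\<Prod>b\<in>Basis. f b (\<phi> g \<bullet> b)) = (\<Prod>b\<in>Basis. f b (g b))" for g
    unfolding \<phi>_def
    by (intro prod.cong refl) (simp add: inner_sum_left inner_Basis if_distrib cong: if_cong)
  have "integrable (\<Pi>\<^sub>M b\<in>Basis. lborel) (\<lambda>g. \<Prod>b\<in>Basis. f b (g b))"
    "integral\<^sup>L (\<Pi>\<^sub>M b\<in>Basis. lborel) (\<lambda>g. \<Prod>b\<in>Basis. f b (g b)) = (\<Prod>b\<in>Basis. integral\<^sup>L lborel (f b))"
    using assms by (auto intro: product_integrable_prod product_integral_prod)
  then show ?thesis
    unfolding has_bochner_integral_iff lborel_eq[where 'a='a] \<phi>_def[symmetric]
    by (simp add: integrable_distr_eq integral_distr coords)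
qed

lemma exp_inner_minus_norm_sq_eq_prod_Basis:
  fixes t a :: "'a::euclidean_space"
  shows "exp (t \<bullet> a - \<gamma> * (norm t)\<^sup>2) = (\<Prod>b\<in>Basis. exp ((a \<bullet> b) * (t \<bullet> b) - \<gamma> * (t \<bullet> b)\<^sup>2))"
proof -
  have "t \<bullet> a - \<gamma> * (norm t)\<^sup>2 = (\<Sum>b\<in>Basis. (a \<bullet> b) * (t \<bullet> b) - \<gamma> * (t \<bullet> b)\<^sup>2)"
    by (simp add: euclidean_inner[of t a] norm_sq_eq_sum_Basis sum_subtractf sum_distrib_left
        mult.commute)
  then show ?thesis by (simp add: exp_sum)
qed

text \<open>The Gaussian integral factorises over the coordinates, so a weight depending on one
  coordinate is integrated by the one-dimensional formula.\<close>

lemma has_bochner_integral_gauss_coordinate_weight: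
  fixes a :: "'a::euclidean_space"
  assumes "\<gamma> > 0" and "i \<in> Basis"
    and one_dim: "\<And>c. has_bochner_integral lborel (\<lambda>x. w x * exp (c * x - \<gamma> * x\<^sup>2))
      (m c * gauss_laplace \<gamma> c)"
  shows "has_bochner_integral lborel (\<lambda>t::'a. w (t \<bullet> i) * exp (t \<bullet> a - \<gamma> * (norm t)\<^sup>2))
    (m (a \<bullet> i) * gauss_laplace \<gamma> a)"
proof -
  define f where "f = (\<lambda>b x. (if b = i then w x else 1) * exp ((a \<bullet> b) * x - \<gamma> * x\<^sup>2))"
  have f: "has_bochner_integral lborel (f b)
      ((if b = i then m (a \<bullet> b) else 1) * gauss_laplace \<gamma> (a \<bullet> b))" for b
    unfolding f_def using one_dim has_bochner_integral_exp_affine_quadratic[OF \<open>\<gamma> > 0\<close>] by auto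
  have "has_bochner_integral lborel (\<lambda>t::'a. \<Prod>b\<in>Basis. f b (t \<bullet> b))
      (\<Prod>b\<in>Basis. integral\<^sup>L lborel (f b))"
    by (rule has_bochner_integral_lborel_prod_Basis) (rule integrable.intros[OF f])
  moreover have "(\<Prod>b\<in>Basis. integral\<^sup>L lborel (f b))
      = (\<Prod>b\<in>Basis. (if b = i then m (a \<bullet> b) else 1) * gauss_laplace \<gamma> (a \<bullet> b))"
    using f by (intro prod.cong refl) (simp add: has_bochner_integral_integral_eq)
  moreover have "\<dots> = m (a \<bullet> i) * gauss_laplace \<gamma> a"
    unfolding gauss_laplace_eq_prod_Basis[of \<gamma> a] prod.distrib using \<open>i \<in> Basis\<close> by simp
  moreover have "(\<Prod>b\<in>Basis. f b (t \<bullet> b)) = w (t \<bullet> i) * exp (t \<bullet> a - \<gamma> * (norm t)\<^sup>2)" for t :: 'a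
    unfolding f_def prod.distrib exp_inner_minus_norm_sq_eq_prod_Basis using \<open>i \<in> Basis\<close> by simp
  ultimately show ?thesis by simp
qed

lemma has_bochner_integral_gauss:
  fixes a :: "'a::euclidean_space"
  assumes "\<gamma> > 0"
  shows "has_bochner_integral lborel (\<lambda>t::'a. exp (t \<bullet> a - \<gamma> * (norm t)\<^sup>2)) (gauss_laplace \<gamma> a)"
proof -
  obtain i :: 'a where "i \<in> Basis" using nonempty_Basis by blast
  from has_bochner_integral_gauss_coordinate_weight[OF assms this, where w="\<lambda>_. 1" and m="\<lambda>_. 1"]
  show ?thesis using has_bochner_integral_exp_affine_quadratic[OF assms] by simp
qed

lemma has_bochner_integral_gauss_inner:
  fixes a v :: "'a::euclidean_space"
  assumes "\<gamma> > 0"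
  shows "has_bochner_integral lborel (\<lambda>t::'a. (t \<bullet> v) * exp (t \<bullet> a - \<gamma> * (norm t)\<^sup>2))
    ((a \<bullet> v) / (2 * \<gamma>) * gauss_laplace \<gamma> a)"
proof -
  note coordinate = has_bochner_integral_gauss_coordinate_weight[OF assms _
      has_bochner_integral_exp_affine_quadratic_moment1[OF assms]]
  have "has_bochner_integral lborel
      (\<lambda>t::'a. \<Sum>i\<in>Basis. (v \<bullet> i) * ((t \<bullet> i) * exp (t \<bullet> a - \<gamma> * (norm t)\<^sup>2)))
      (\<Sum>i\<in>Basis. (v \<bullet> i) * ((a \<bullet> i) / (2 * \<gamma>) * gauss_laplace \<gamma> a))"
    by (intro has_bochner_integral_sum has_bochner_integral_mult_right coordinate)
  moreover have "(\<Sum>i\<in>Basis. (v \<bullet> i) * ((a \<bullet> i) / (2 * \<gamma>) * gauss_laplace \<gamma> a))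
      = (a \<bullet> v) / (2 * \<gamma>) * gauss_laplace \<gamma> a"
    by (simp add: euclidean_inner[of a v] sum_distrib_left sum_divide_distrib ac_simps)
  moreover have "(\<Sum>i\<in>Basis. (v \<bullet> i) * ((t \<bullet> i) * exp (t \<bullet> a - \<gamma> * (norm t)\<^sup>2)))
      = (t \<bullet> v) * exp (t \<bullet> a - \<gamma> * (norm t)\<^sup>2)" for t :: 'a
    by (simp add: euclidean_inner[of t v] sum_distrib_right ac_simps)
  ultimately show ?thesis by simp
qed

lemma has_bochner_integral_gauss_norm_sq:
  fixes a :: "'a::euclidean_space"
  assumes "\<gamma> > 0"
  shows "has_bochner_integral lborel (\<lambda>t::'a. (norm t)\<^sup>2 * exp (t \<bullet> a - \<gamma> * (norm t)\<^sup>2))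
    (((norm a)\<^sup>2 / (4 * \<gamma>\<^sup>2) + DIM('a) / (2 * \<gamma>)) * gauss_laplace \<gamma> a)"
proof -
  note coordinate = has_bochner_integral_gauss_coordinate_weight[OF assms _
      has_bochner_integral_exp_affine_quadratic_moment2[OF assms]]
  have "has_bochner_integral lborel (\<lambda>t::'a. \<Sum>i\<in>Basis. (t \<bullet> i)\<^sup>2 * exp (t \<bullet> a - \<gamma> * (norm t)\<^sup>2))
      (\<Sum>i\<in>Basis. ((a \<bullet> i)\<^sup>2 / (4 * \<gamma>\<^sup>2) + 1 / (2 * \<gamma>)) * gauss_laplace \<gamma> a)"
    by (intro has_bochner_integral_sum coordinate)
  moreover have "(\<Sum>i\<in>Basis. ((a \<bullet> i)\<^sup>2 / (4 * \<gamma>\<^sup>2) + 1 / (2 * \<gamma>)) * gauss_laplace \<gamma> a)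
      = ((norm a)\<^sup>2 / (4 * \<gamma>\<^sup>2) + DIM('a) / (2 * \<gamma>)) * gauss_laplace \<gamma> a"
    by (simp add: norm_sq_eq_sum_Basis[of a] distrib_right sum.distrib sum_distrib_right
        sum_divide_distrib)
  moreover have "(\<Sum>i\<in>Basis. (t \<bullet> i)\<^sup>2 * exp (t \<bullet> a - \<gamma> * (norm t)\<^sup>2))
      = (norm t)\<^sup>2 * exp (t \<bullet> a - \<gamma> * (norm t)\<^sup>2)" for t :: 'a
    by (simp add: norm_sq_eq_sum_Basis[of t] sum_distrib_right)
  ultimately show ?thesis by simp
qed

lemma has_bochner_integral_gauss_quadratic:
  fixes a :: "'a::euclidean_space"
  assumes "\<gamma> > 0"
  shows "has_bochner_integral lborel (\<lambda>t. (p - t \<bullet> a + (norm t)\<^sup>2) * exp (t \<bullet> a - \<gamma> * (norm t)\<^sup>2))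
    (gauss_laplace \<gamma> a * (p + (DIM('a) - (norm a)\<^sup>2) / (2 * \<gamma>) + (norm a)\<^sup>2 / (4 * \<gamma>\<^sup>2)))"
proof -
  have "has_bochner_integral lborel (\<lambda>t. p * exp (t \<bullet> a - \<gamma> * (norm t)\<^sup>2)
      - (t \<bullet> a) * exp (t \<bullet> a - \<gamma> * (norm t)\<^sup>2) + (norm t)\<^sup>2 * exp (t \<bullet> a - \<gamma> * (norm t)\<^sup>2))
    (p * gauss_laplace \<gamma> a - (a \<bullet> a) / (2 * \<gamma>) * gauss_laplace \<gamma> a
      + ((norm a)\<^sup>2 / (4 * \<gamma>\<^sup>2) + DIM('a) / (2 * \<gamma>)) * gauss_laplace \<gamma> a)"
    by (intro has_bochner_integral_add has_bochner_integral_diff has_bochner_integral_mult_right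
        has_bochner_integral_gauss has_bochner_integral_gauss_inner has_bochner_integral_gauss_norm_sq
        assms)
  then show ?thesis
    by (simp add: power2_norm_eq_inner algebra_simps diff_divide_distrib)
qed

section \<open>Spectral decomposition of symmetric matrices\<close>

definition symmetric_matrix :: "real^'n^'n \<Rightarrow> bool" where
  "symmetric_matrix A \<longleftrightarrow> transpose A = A"

lemma symmetric_matrix_inner:
  "symmetric_matrix A \<Longrightarrow> x \<bullet> (A *v y) = (A *v x) \<bullet> y"
  unfolding symmetric_matrix_def by (metis dot_lmul_matrix transpose_matrix_vector)

lemma posdef_imp_symmetric_matrix: "posdef A \<Longrightarrow> symmetric_matrix A"
  by (simp add: posdef_def symmetric_matrix_def)

lemma quadratic_nonpos_imp_linear_coeff_zero:
  fixes a C :: real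
  assumes "\<And>t. t * a + t\<^sup>2 * C \<le> 0"
  shows "a = 0"
proof (rule ccontr)
  assume "a \<noteq> 0"
  define t where "t = a / (\<bar>C\<bar> + 1)"
  have "- (t\<^sup>2 * \<bar>C\<bar>) \<le> t\<^sup>2 * C" using mult_left_mono[of "- \<bar>C\<bar>" C "t\<^sup>2"] by simp
  then have "t * (a - t * \<bar>C\<bar>) \<le> t * a + t\<^sup>2 * C" by (simp add: algebra_simps power2_eq_square)
  moreover have "t * (a - t * \<bar>C\<bar>) = (a / (\<bar>C\<bar> + 1))\<^sup>2"
    unfolding t_def by (simp add: field_simps power2_eq_square)
  moreover have "(a / (\<bar>C\<bar> + 1))\<^sup>2 > 0" using \<open>a \<noteq> 0\<close> by (simp add: add_pos_nonneg)
  ultimately show False using assms[of t] by linarith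
qed

lemma subspace_unit_sphere_max_quadratic_form:
  fixes A :: "real^'n^'n"
  assumes "subspace V" and "V \<noteq> {0}"
  obtains v where "v \<in> V" "norm v = 1"
    "\<And>y. y \<in> V \<Longrightarrow> y \<bullet> (A *v y) \<le> (v \<bullet> (A *v v)) * (norm y)\<^sup>2"
proof -
  define f where "f = (\<lambda>x::real^'n. x \<bullet> (A *v x))"
  have "compact (V \<inter> sphere 0 1)"
    using closed_subspace[OF assms(1)] by (metis compact_Int_closed compact_sphere inf_commute)
  moreover obtain x where "x \<in> V" "x \<noteq> 0" using assms subspace_0 by blast
  then have "(1 / norm x) *\<^sub>R x \<in> V \<inter> sphere 0 1" using assms(1) by (simp add: subspace_scale)
  then have "V \<inter> sphere 0 1 \<noteq> {}" by blast
  moreover have "continuous_on (V \<inter> sphere 0 1) f" unfolding f_def by (intro continuous_intros)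
  ultimately obtain v where v: "v \<in> V \<inter> sphere 0 1" and max: "\<And>y. y \<in> V \<inter> sphere 0 1 \<Longrightarrow> f y \<le> f v"
    using continuous_attains_sup by metis
  have "f y \<le> f v * (norm y)\<^sup>2" if "y \<in> V" for y
  proof (cases "y = 0")
    case False
    then have "f ((1 / norm y) *\<^sub>R y) \<le> f v"
      using that assms(1) by (intro max) (simp add: subspace_scale)
    then show ?thesis using False
      by (simp add: f_def matrix_vector_mult_scaleR field_simps power2_eq_square)
  qed (simp add: f_def)
  with v show ?thesis by (intro that) (auto simp: f_def)
qed

text \<open>A maximiser \<open>v\<close> of the quadratic form on the unit sphere of an invariant subspace is an
  eigenvector: perturbing it along \<open>w = A v - l v\<close> would otherwise increase the form.\<close>

lemma symmetric_matrix_has_eigenvector_in_invariant_subspace: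
  fixes A :: "real^'n^'n"
  assumes sym: "symmetric_matrix A" and V: "subspace V" "V \<noteq> {0}"
    and invariant: "\<And>x. x \<in> V \<Longrightarrow> A *v x \<in> V"
  obtains v l where "v \<in> V" "norm v = 1" "A *v v = l *\<^sub>R v"
proof -
  obtain v where v: "v \<in> V" "norm v = 1"
    and max: "\<And>y. y \<in> V \<Longrightarrow> y \<bullet> (A *v y) \<le> (v \<bullet> (A *v v)) * (norm y)\<^sup>2"
    using subspace_unit_sphere_max_quadratic_form[OF V] by blast
  define l where "l = v \<bullet> (A *v v)"
  define w where "w = A *v v - l *\<^sub>R v"
  have vv: "v \<bullet> v = 1" using v by (simp add: norm_eq_1)
  have "w \<in> V" unfolding w_def using invariant v V by (simp add: subspace_diff subspace_scale)
  have "t * (2 * (w \<bullet> w)) + t\<^sup>2 * (w \<bullet> (A *v w) - l * (w \<bullet> w)) \<le> 0" for t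
  proof -
    have "v + t *\<^sub>R w \<in> V" using v \<open>w \<in> V\<close> V by (simp add: subspace_add subspace_scale)
    from max[OF this] have "(v + t *\<^sub>R w) \<bullet> (A *v (v + t *\<^sub>R w)) \<le> l * ((v + t *\<^sub>R w) \<bullet> (v + t *\<^sub>R w))"
      by (simp add: l_def power2_norm_eq_inner)
    then show ?thesis
      using symmetric_matrix_inner[OF sym, of v w] vv
      by (simp add: w_def l_def inner_commute power2_eq_square algebra_simps)
  qed
  then have "w = 0" using quadratic_nonpos_imp_linear_coeff_zero by fastforce
  then show ?thesis using that v unfolding w_def by simp
qed

definition orthonormal_eigenbasis :: "real^'n^'n \<Rightarrow> (real^'n) set \<Rightarrow> (real^'n) set \<Rightarrow> bool" where
  "orthonormal_eigenbasis A V B \<longleftrightarrow> finite B \<and> B \<subseteq> V \<and> span B = V \<and> pairwise orthogonal B \<and>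
     (\<forall>b\<in>B. norm b = 1 \<and> A *v b = (b \<bullet> (A *v b)) *\<^sub>R b)"

lemma orthonormal_eigenbasis_insert:
  fixes A :: "real^'n^'n"
  assumes V: "subspace V" and v: "v \<in> V" "norm v = 1" "A *v v = l *\<^sub>R v"
    and B: "orthonormal_eigenbasis A (V \<inter> {y. orthogonal v y}) B"
  shows "orthonormal_eigenbasis A V (insert v B)"
proof -
  have vv: "v \<bullet> v = 1" using v by (simp add: norm_eq_1)
  have "v \<notin> B" using B vv by (auto simp: orthonormal_eigenbasis_def orthogonal_def)
  have "V \<subseteq> span (insert v B)"
  proof
    fix x assume "x \<in> V"
    then have "x - (v \<bullet> x) *\<^sub>R v \<in> span B"
      using B v V vv
      by (auto simp: orthonormal_eigenbasis_def orthogonal_def subspace_diff subspace_scale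
          inner_diff_right)
    then have "(x - (v \<bullet> x) *\<^sub>R v) + (v \<bullet> x) *\<^sub>R v \<in> span (insert v B)"
      by (meson span_add span_base span_mono span_scale insertI1 subset_insertI subsetD)
    then show "x \<in> span (insert v B)" by simp
  qed
  moreover have "insert v B \<subseteq> V" using B v by (auto simp: orthonormal_eigenbasis_def)
  ultimately have "span (insert v B) = V" using span_minimal[OF _ V] by blast
  then show ?thesis
    using B v vv \<open>v \<notin> B\<close> \<open>insert v B \<subseteq> V\<close>
    by (auto simp: orthonormal_eigenbasis_def pairwise_insert orthogonal_def inner_commute)
qed

lemma symmetric_matrix_orthonormal_eigenbasis_subspace:
  fixes A :: "real^'n^'n"
  assumes sym: "symmetric_matrix A"
  shows "subspace V \<Longrightarrow> (\<And>x. x \<in> V \<Longrightarrow> A *v x \<in> V) \<Longrightarrow> \<exists>B. orthonormal_eigenbasis A V B"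
proof (induction "dim V" arbitrary: V rule: less_induct)
  case less
  show ?case
  proof (cases "V = {0}")
    case True
    then show ?thesis by (auto simp: orthonormal_eigenbasis_def intro!: exI[of _ "{}"])
  next
    case False
    obtain v l where v: "v \<in> V" "norm v = 1" "A *v v = l *\<^sub>R v"
      using symmetric_matrix_has_eigenvector_in_invariant_subspace[OF sym less.prems(1) False]
        less.prems(2) by blast
    define W where "W = V \<inter> {y. orthogonal v y}"
    have W: "subspace W"
      unfolding W_def by (rule subspace_inter[OF less.prems(1) subspace_orthogonal_to_vector])
    have "A *v x \<in> W" if "x \<in> W" for x
      using that v less.prems(2) symmetric_matrix_inner[OF sym, of v x]
      by (auto simp: W_def orthogonal_def)
    moreover have "dim W < dim V"
    proof (rule dim_psubset)
      have "v \<notin> W" using v by (auto simp: W_def orthogonal_def norm_eq_1)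
      then have "W \<subset> V" using v by (auto simp: W_def)
      then show "span W \<subset> span V" using W less.prems(1) by (metis span_eq_iff)
    qed
    ultimately obtain B where "orthonormal_eigenbasis A W B" using less.hyps[OF _ W] by blast
    then show ?thesis
      using orthonormal_eigenbasis_insert[OF less.prems(1) v] by (auto simp: W_def)
  qed
qed

lemma symmetric_matrix_orthonormal_eigenbasis:
  fixes A :: "real^'n^'n"
  assumes "symmetric_matrix A"
  obtains B where "orthonormal_eigenbasis A UNIV B"
  using symmetric_matrix_orthonormal_eigenbasis_subspace[OF assms, of UNIV] by auto

lemma orthonormal_eigenbasis_eigenvector:
  "orthonormal_eigenbasis A V B \<Longrightarrow> b \<in> B \<Longrightarrow> A *v b = (b \<bullet> (A *v b)) *\<^sub>R b"
  unfolding orthonormal_eigenbasis_def by blast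

lemma orthonormal_eigenbasis_inner:
  "orthonormal_eigenbasis A V B \<Longrightarrow> b \<in> B \<Longrightarrow> c \<in> B \<Longrightarrow> b \<bullet> c = (if b = c then 1 else 0)"
  unfolding orthonormal_eigenbasis_def pairwise_def orthogonal_def by (auto simp: norm_eq_1)

lemma orthonormal_eigenbasis_sum_inner:
  assumes B: "orthonormal_eigenbasis A V B" and "c \<in> B"
  shows "(\<Sum>b\<in>B. f b * (c \<bullet> b)) = f c"
proof -
  have "(\<Sum>b\<in>B. f b * (c \<bullet> b)) = (\<Sum>b\<in>B. if b = c then f b else 0)"
    using orthonormal_eigenbasis_inner[OF B \<open>c \<in> B\<close>] by (intro sum.cong) auto
  also have "\<dots> = f c" using B \<open>c \<in> B\<close> by (simp add: orthonormal_eigenbasis_def)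
  finally show ?thesis .
qed

lemma orthonormal_eigenbasis_expansion:
  assumes B: "orthonormal_eigenbasis A UNIV B"
  shows "x = (\<Sum>b\<in>B. (b \<bullet> x) *\<^sub>R b)"
proof -
  have "finite B" "x \<in> span B" using B by (auto simp: orthonormal_eigenbasis_def)
  then obtain u where u: "x = (\<Sum>b\<in>B. u b *\<^sub>R b)" using span_finite by auto
  then have "c \<bullet> x = u c" if "c \<in> B" for c
    using orthonormal_eigenbasis_sum_inner[OF B that] by (simp add: inner_sum_right)
  then show ?thesis using u by (metis (no_types, lifting) sum.cong)
qed

lemma matrix_vector_mult_sum_right: "A *v (\<Sum>b\<in>B. f b) = (\<Sum>b\<in>B. A *v f b)"
  for A :: "real^'n^'m"
  by (induct B rule: infinite_finite_induct) (simp_all add: matrix_vector_right_distrib)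

lemma matrix_vector_mult_sum_left: "(\<Sum>b\<in>B. M b) *v u = (\<Sum>b\<in>B. M b *v u)"
  for M :: "'b \<Rightarrow> real^'n^'m"
  by (induct B rule: infinite_finite_induct) (simp_all add: matrix_vector_mult_add_rdistrib)

lemma outer_matrix_vector_mult: "outer v w *v u = (w \<bullet> u) *\<^sub>R v"
  unfolding outer_def
  by (simp add: vec_eq_iff matrix_vector_mult_def inner_vec_def sum_distrib_left ac_simps)

definition spectral_matrix :: "(real^'n) set \<Rightarrow> (real^'n \<Rightarrow> real) \<Rightarrow> real^'n^'n" where
  "spectral_matrix B \<mu> = (\<Sum>b\<in>B. \<mu> b *\<^sub>R outer b b)"

lemma spectral_matrix_vector_mult:
  "spectral_matrix B \<mu> *v x = (\<Sum>b\<in>B. (\<mu> b * (b \<bullet> x)) *\<^sub>R b)"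
  unfolding spectral_matrix_def matrix_vector_mult_sum_left
  by (simp add: scaleR_matrix_vector_assoc[symmetric] outer_matrix_vector_mult)

lemma spectral_matrix_inner:
  assumes "orthonormal_eigenbasis A V B" "b \<in> B"
  shows "b \<bullet> (spectral_matrix B \<mu> *v x) = \<mu> b * (b \<bullet> x)"
  using orthonormal_eigenbasis_sum_inner[OF assms, of "\<lambda>c. \<mu> c * (c \<bullet> x)"]
  by (simp add: spectral_matrix_vector_mult inner_sum_right)

lemma spectral_matrix_mult:
  assumes "orthonormal_eigenbasis A V B"
  shows "spectral_matrix B \<mu> ** spectral_matrix B \<nu> = spectral_matrix B (\<lambda>b. \<mu> b * \<nu> b)"
  unfolding matrix_eq matrix_vector_mul_assoc[symmetric]
  by (simp add: spectral_matrix_vector_mult[of B \<mu>] spectral_matrix_vector_mult[of B "\<lambda>b. \<mu> b * \<nu> b"]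
      spectral_matrix_inner[OF assms] mult.assoc)

lemma spectral_matrix_eq:
  assumes B: "orthonormal_eigenbasis A UNIV B"
  shows "spectral_matrix B (\<lambda>b. b \<bullet> (A *v b)) = A"
proof -
  have "A *v x = spectral_matrix B (\<lambda>b. b \<bullet> (A *v b)) *v x" for x
  proof -
    have "A *v x = (\<Sum>b\<in>B. (b \<bullet> x) *\<^sub>R (A *v b))"
      by (subst orthonormal_eigenbasis_expansion[OF B, of x])
        (simp add: matrix_vector_mult_sum_right matrix_vector_mult_scaleR)
    also have "\<dots> = spectral_matrix B (\<lambda>b. b \<bullet> (A *v b)) *v x"
      unfolding spectral_matrix_vector_mult
      by (intro sum.cong refl) (subst orthonormal_eigenbasis_eigenvector[OF B], simp_all)
    finally show ?thesis .
  qed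
  then show ?thesis by (metis matrix_eq)
qed
lemma spectral_matrix_cong:
  "(\<And>b. b \<in> B \<Longrightarrow> \<mu> b = \<nu> b) \<Longrightarrow> spectral_matrix B \<mu> = spectral_matrix B \<nu>"
  unfolding spectral_matrix_def by (rule sum.cong) simp_all

lemma spectral_matrix_one:
  assumes "orthonormal_eigenbasis A UNIV B"
  shows "spectral_matrix B (\<lambda>_. 1) = mat 1"
  unfolding matrix_eq spectral_matrix_vector_mult
  by (simp add: orthonormal_eigenbasis_expansion[OF assms, symmetric])

lemma spectral_matrix_zero: "spectral_matrix B (\<lambda>_. 0) = 0"
  by (simp add: spectral_matrix_def)

lemma spectral_matrix_quadratic_form:
  "x \<bullet> (spectral_matrix B \<mu> *v x) = (\<Sum>b\<in>B. \<mu> b * (b \<bullet> x)\<^sup>2)"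
  by (simp add: spectral_matrix_vector_mult inner_sum_right power2_eq_square inner_commute mult.assoc)

lemma posdef_spectral_matrix:
  assumes B: "orthonormal_eigenbasis A UNIV B" and pos: "\<And>b. b \<in> B \<Longrightarrow> \<mu> b > 0"
  shows "posdef (spectral_matrix B \<mu>)"
proof -
  have "x \<bullet> (spectral_matrix B \<mu> *v x) > 0" if "x \<noteq> 0" for x
  proof -
    obtain b where b: "b \<in> B" "b \<bullet> x \<noteq> 0"
    proof (rule ccontr)
      assume "\<not> thesis"
      then have "(\<Sum>b\<in>B. (b \<bullet> x) *\<^sub>R b) = 0" using that by (intro sum.neutral) auto
      then show False using orthonormal_eigenbasis_expansion[OF B, of x] \<open>x \<noteq> 0\<close> by simp
    qed
    have "finite B" using B by (simp add: orthonormal_eigenbasis_def)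
    moreover have "0 < \<mu> b * (b \<bullet> x)\<^sup>2" using pos[OF b(1)] b(2) by simp
    moreover have "0 \<le> \<mu> c * (c \<bullet> x)\<^sup>2" if "c \<in> B" for c using pos[OF that] by simp
    ultimately show ?thesis unfolding spectral_matrix_quadratic_form by (intro sum_pos2[OF _ b(1)])
  qed
  moreover have "transpose (spectral_matrix B \<mu>) = spectral_matrix B \<mu>"
    unfolding spectral_matrix_def outer_def transpose_def by (simp add: vec_eq_iff mult.commute)
  ultimately show ?thesis by (simp add: posdef_def)
qed

lemma posdef_eigenvalue_pos:
  assumes "posdef A" "orthonormal_eigenbasis A UNIV B" "b \<in> B"
  shows "b \<bullet> (A *v b) > 0"
proof -
  have "b \<noteq> 0" using assms(2,3) by (auto simp: orthonormal_eigenbasis_def)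
  then show ?thesis using assms(1) by (simp add: posdef_def)
qed

text \<open>If \<open>R\<^sub>1\<^sup>2 = R\<^sub>2\<^sup>2\<close>, then \<open>R\<^sub>1 D + D R\<^sub>2 = 0\<close> for \<open>D = R\<^sub>1 - R\<^sub>2\<close>; testing this against an eigenvector
  of \<open>D\<close> with eigenvalue \<open>d\<close> gives \<open>d (c\<cdot>R\<^sub>1c + c\<cdot>R\<^sub>2c) = 0\<close>, so all eigenvalues of \<open>D\<close> vanish.\<close>

lemma posdef_square_root_unique:
  fixes R1 R2 :: "real^'n^'n"
  assumes R1: "posdef R1" and R2: "posdef R2" and eq: "R1 ** R1 = R2 ** R2"
  shows "R1 = R2"
proof -
  define D where "D = R1 - R2"
  have "symmetric_matrix D"
    using R1 R2 unfolding D_def posdef_def symmetric_matrix_def by (simp add: transpose_def vec_eq_iff)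
  then obtain C where C: "orthonormal_eigenbasis D UNIV C"
    using symmetric_matrix_orthonormal_eigenbasis by blast
  have "c \<bullet> (D *v c) = 0" if c: "c \<in> C" for c
  proof -
    define d where "d = c \<bullet> (D *v c)"
    have Dc: "D *v c = d *\<^sub>R c" unfolding d_def by (rule orthonormal_eigenbasis_eigenvector[OF C c])
    have "R1 *v (D *v c) + D *v (R2 *v c) = R1 *v (R1 *v c) - R2 *v (R2 *v c)"
      by (simp add: D_def matrix_vector_mult_diff_distrib matrix_vector_mult_diff_rdistrib)
    also have "\<dots> = 0" by (simp add: matrix_vector_mul_assoc eq)
    finally have "R1 *v (D *v c) + D *v (R2 *v c) = 0" .
    then have "c \<bullet> (R1 *v (D *v c)) + (D *v c) \<bullet> (R2 *v c) = 0"
      using symmetric_matrix_inner[OF \<open>symmetric_matrix D\<close>, of c "R2 *v c"]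
      by (metis inner_right_distrib inner_zero_right)
    then have "d * (c \<bullet> (R1 *v c) + c \<bullet> (R2 *v c)) = 0"
      by (simp add: Dc algebra_simps)
    moreover have "c \<noteq> 0" using C c by (auto simp: orthonormal_eigenbasis_def)
    then have "c \<bullet> (R1 *v c) + c \<bullet> (R2 *v c) > 0" using R1 R2 by (simp add: posdef_def add_pos_pos)
    ultimately show ?thesis unfolding d_def by simp
  qed
  then have "D = 0"
    using spectral_matrix_eq[OF C] spectral_matrix_cong[of C "\<lambda>c. c \<bullet> (D *v c)" "\<lambda>_. 0"]
      spectral_matrix_zero
    by metis
  then show ?thesis unfolding D_def by simp
qed

lemma matrix_inv_eqI:
  fixes A A' :: "real^'n^'n"
  assumes "A ** A' = mat 1"
  shows "matrix_inv A = A'"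
proof -
  have "A ** A' = mat 1 \<and> A' ** A = mat 1" using assms matrix_left_right_inverse by blast
  then have inv: "A ** matrix_inv A = mat 1 \<and> matrix_inv A ** A = mat 1"
    unfolding matrix_inv_def by (rule someI)
  have "matrix_inv A = matrix_inv A ** (A ** A')" using assms by simp
  also have "\<dots> = A'" using inv by (simp add: matrix_mul_assoc)
  finally show ?thesis .
qed

lemma inv_sqrt_eq_spectral_matrix:
  assumes S: "posdef S" and B: "orthonormal_eigenbasis S UNIV B"
  shows "inv_sqrt S = spectral_matrix B (\<lambda>b. 1 / sqrt (b \<bullet> (S *v b)))"
proof -
  define R where "R = spectral_matrix B (\<lambda>b. 1 / sqrt (b \<bullet> (S *v b)))"
  have pos: "\<And>b. b \<in> B \<Longrightarrow> b \<bullet> (S *v b) > 0" using posdef_eigenvalue_pos[OF S B] .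
  have "S ** spectral_matrix B (\<lambda>b. 1 / (b \<bullet> (S *v b))) = mat 1"
    unfolding spectral_matrix_one[OF B, symmetric]
    by (subst (1) spectral_matrix_eq[OF B, symmetric]) (auto simp: spectral_matrix_mult[OF B] pos
        intro!: spectral_matrix_cong dest: pos)
  then have "matrix_inv S = spectral_matrix B (\<lambda>b. 1 / (b \<bullet> (S *v b)))" by (rule matrix_inv_eqI)
  also have "\<dots> = R ** R"
    unfolding R_def spectral_matrix_mult[OF B] using pos
    by (intro spectral_matrix_cong) (simp add: real_sqrt_mult[symmetric] less_imp_le)
  finally have "R ** R = matrix_inv S" ..
  moreover have "posdef R" unfolding R_def using pos by (intro posdef_spectral_matrix[OF B]) simp
  ultimately show ?thesis
    unfolding inv_sqrt_def R_def[symmetric]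
    by (intro the_equality) (simp, metis posdef_square_root_unique)
qed

lemma
  fixes S :: "real^'n^'n"
  assumes "posdef S"
  shows symmetric_inv_sqrt: "symmetric_matrix (inv_sqrt S)"
    and inv_sqrt_sandwich: "inv_sqrt S *v (S *v (inv_sqrt S *v x)) = x"
proof -
  obtain B where B: "orthonormal_eigenbasis S UNIV B"
    using symmetric_matrix_orthonormal_eigenbasis[OF posdef_imp_symmetric_matrix[OF assms]] .
  have pos: "\<And>b. b \<in> B \<Longrightarrow> b \<bullet> (S *v b) > 0" using posdef_eigenvalue_pos[OF assms B] .
  note R = inv_sqrt_eq_spectral_matrix[OF assms B]
  show "symmetric_matrix (inv_sqrt S)"
    unfolding R using posdef_spectral_matrix[OF B, of "\<lambda>b. 1 / sqrt (b \<bullet> (S *v b))"] pos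
    by (simp add: posdef_imp_symmetric_matrix)
  have "inv_sqrt S ** (S ** inv_sqrt S) = mat 1"
    unfolding R spectral_matrix_one[OF B, symmetric]
    by (subst (2) spectral_matrix_eq[OF B, symmetric]) (auto simp: spectral_matrix_mult[OF B]
        intro!: spectral_matrix_cong dest: pos)
  then show "inv_sqrt S *v (S *v (inv_sqrt S *v x)) = x"
    by (simp add: matrix_vector_mul_assoc)
qed

section \<open>The test statistic as a sum over pairs\<close>

lemma grad_eqI:
  assumes "(f has_derivative (\<lambda>h. g \<bullet> h)) (at t)"
  shows "grad f t = g"
  unfolding grad_def
proof (rule the_equality)
  fix g' assume "(f has_derivative (\<lambda>h. g' \<bullet> h)) (at t)"
  from has_derivative_unique[OF assms this] have "(g - g') \<bullet> (g - g') = 0"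
    by (metis inner_diff_left inner_diff_right diff_self)
  then show "g' = g" by simp
qed (rule assms)

lemma grad_emp_mgf:
  "grad (emp_mgf n X) t = (1 / real n) *\<^sub>R (\<Sum>j=1..n. exp (t \<bullet> scaled_res n X j) *\<^sub>R scaled_res n X j)"
proof (rule grad_eqI)
  have "(emp_mgf n X has_derivative
      (\<lambda>h. (1 / real n) * (\<Sum>j=1..n. exp (t \<bullet> scaled_res n X j) * (scaled_res n X j \<bullet> h)))) (at t)"
    unfolding emp_mgf_def[abs_def]
    by (intro has_derivative_mult_right has_derivative_sum)
      (auto intro!: derivative_eq_intros simp: mult.commute inner_commute)
  then show "(emp_mgf n X has_derivative (\<lambda>h. ((1 / real n) *\<^sub>R
      (\<Sum>j=1..n. exp (t \<bullet> scaled_res n X j) *\<^sub>R scaled_res n X j)) \<bullet> h)) (at t)"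
    by (simp add: inner_sum_left)
qed

lemma norm_sq_sum_exp_weighted_eq_double_sum:
  fixes y :: "nat \<Rightarrow> 'a::real_inner" and t :: 'a
  shows "(norm ((1 / real n) *\<^sub>R (\<Sum>j\<in>J. exp (t \<bullet> y j) *\<^sub>R (y j - t))))\<^sup>2 * exp (- \<gamma> * (norm t)\<^sup>2) =
    (1 / (real n)\<^sup>2) * (\<Sum>j\<in>J. \<Sum>k\<in>J. (y j \<bullet> y k - t \<bullet> (y j + y k) + (norm t)\<^sup>2)
      * exp (t \<bullet> (y j + y k) - \<gamma> * (norm t)\<^sup>2))"
proof -
  have exp: "exp (t \<bullet> y j) * exp (t \<bullet> y k) * exp (- \<gamma> * (norm t)\<^sup>2)
      = exp (t \<bullet> (y j + y k) - \<gamma> * (norm t)\<^sup>2)"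
    for j k by (simp add: exp_add[symmetric] inner_add_right)
  have inner: "(y k - t) \<bullet> (y j - t) = y j \<bullet> y k - t \<bullet> (y j + y k) + (norm t)\<^sup>2" for j k
    by (simp add: power2_norm_eq_inner inner_commute algebra_simps)
  have "(norm ((1 / real n) *\<^sub>R (\<Sum>j\<in>J. exp (t \<bullet> y j) *\<^sub>R (y j - t))))\<^sup>2 =
      (1 / (real n)\<^sup>2) * (\<Sum>j\<in>J. \<Sum>k\<in>J. exp (t \<bullet> y j) * exp (t \<bullet> y k) * ((y k - t) \<bullet> (y j - t)))"
    unfolding power2_norm_eq_inner
    by (simp add: inner_sum_left inner_sum_right sum_distrib_left power2_eq_square ac_simps)
  moreover have "(\<Sum>j\<in>J. \<Sum>k\<in>J. exp (t \<bullet> y j) * exp (t \<bullet> y k) * ((y k - t) \<bullet> (y j - t)))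
        * exp (- \<gamma> * (norm t)\<^sup>2)
      = (\<Sum>j\<in>J. \<Sum>k\<in>J. (y j \<bullet> y k - t \<bullet> (y j + y k) + (norm t)\<^sup>2)
        * exp (t \<bullet> (y j + y k) - \<gamma> * (norm t)\<^sup>2))"
    unfolding sum_distrib_right by (intro sum.cong refl) (simp only: inner exp[symmetric] ac_simps)
  ultimately show ?thesis by (simp only: mult.assoc)
qed

lemma test_stat_eq_double_sum:
  fixes X :: "nat \<Rightarrow> real^'d"
  assumes "\<gamma> > 0"
  shows "test_stat n X \<gamma> = (1 / real n) * (\<Sum>j=1..n. \<Sum>k=1..n.
    gauss_laplace \<gamma> (scaled_res n X j + scaled_res n X k) * (scaled_res n X j \<bullet> scaled_res n X k
      + (CARD('d) - (norm (scaled_res n X j + scaled_res n X k))\<^sup>2) / (2 * \<gamma>)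
      + (norm (scaled_res n X j + scaled_res n X k))\<^sup>2 / (4 * \<gamma>\<^sup>2)))"
  (is "_ = (1 / real n) * ?I")
proof -
  let ?Y = "scaled_res n X"
  define F where "F = (\<lambda>t::real^'d. (1 / (real n)\<^sup>2) * (\<Sum>j=1..n. \<Sum>k=1..n.
    (?Y j \<bullet> ?Y k - t \<bullet> (?Y j + ?Y k) + (norm t)\<^sup>2) * exp (t \<bullet> (?Y j + ?Y k) - \<gamma> * (norm t)\<^sup>2)))"
  have integrand: "(\<lambda>t. (norm (grad (emp_mgf n X) t - emp_mgf n X t *\<^sub>R t))\<^sup>2 * exp (- \<gamma> * (norm t)\<^sup>2)) = F"
    unfolding F_def grad_emp_mgf emp_mgf_def norm_sq_sum_exp_weighted_eq_double_sum[symmetric]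
    by (simp add: scaleR_diff_right sum_subtractf scaleR_sum_left[symmetric])
  have F: "has_bochner_integral lborel F ((1 / (real n)\<^sup>2) * ?I)"
    unfolding F_def using has_bochner_integral_gauss_quadratic[OF assms, where 'a="real^'d"]
    by (intro has_bochner_integral_mult_right has_bochner_integral_sum) simp
  have "integral UNIV F = integral\<^sup>L lborel F"
    by (intro integral_lborel integrable.intros[OF F])
  also have "\<dots> = (1 / (real n)\<^sup>2) * ?I"
    using F by (rule has_bochner_integral_integral_eq)
  finally show ?thesis
    unfolding test_stat_def integrand by (simp add: power2_eq_square)
qed

lemma powr_mult_sqrt_pi_div_power:
  assumes "\<gamma> > 0"
  shows "\<gamma> powr (2 + real N / 2) * sqrt (pi / \<gamma>) ^ N = \<gamma>\<^sup>2 * pi powr (real N / 2)"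
proof -
  have "sqrt (pi / \<gamma>) ^ N = (pi / \<gamma>) powr (real N / 2)"
    using assms by (simp add: powr_half_sqrt[symmetric] powr_power)
  also have "\<dots> = pi powr (real N / 2) / \<gamma> powr (real N / 2)"
    using assms by (simp add: powr_divide)
  finally show ?thesis using assms by (simp add: powr_add)
qed

text \<open>The normalised contribution of one pair (see \<open>scaled_gauss_laplace_quadratic_eq\<close>), with
  its coefficients written as \<open>2 (d - c)\<close> and \<open>4 c\<close> so that
  \<open>tendsto_exp_times_quadratic_second_order\<close> applies to it literally.\<close>

definition scaled_pair_integral :: "real \<Rightarrow> real \<Rightarrow> real \<Rightarrow> real \<Rightarrow> real" where
  "scaled_pair_integral d p c \<gamma> =
     16 * \<gamma>\<^sup>2 * (exp (c / (4 * \<gamma>)) * (p + 2 * (d - c) / (4 * \<gamma>) + 4 * c / (16 * \<gamma>\<^sup>2)))"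

lemma scaled_gauss_laplace_quadratic_eq:
  fixes a :: "'a::euclidean_space"
  assumes "\<gamma> > 0"
  shows "\<gamma> powr (2 + DIM('a) / 2)
      * (16 * gauss_laplace \<gamma> a * (p + (DIM('a) - (norm a)\<^sup>2) / (2 * \<gamma>) + (norm a)\<^sup>2 / (4 * \<gamma>\<^sup>2)))
      / pi powr (DIM('a) / 2)
    = scaled_pair_integral DIM('a) p ((norm a)\<^sup>2) \<gamma>"
proof -
  let ?d = "real DIM('a)" and ?E = "exp ((norm a)\<^sup>2 / (4 * \<gamma>))"
  let ?P = "p + (?d - (norm a)\<^sup>2) / (2 * \<gamma>) + (norm a)\<^sup>2 / (4 * \<gamma>\<^sup>2)"
  have "\<gamma> powr (2 + ?d / 2) * gauss_laplace \<gamma> a = \<gamma>\<^sup>2 * pi powr (?d / 2) * ?E"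
    using powr_mult_sqrt_pi_div_power[OF assms, of "DIM('a)"] by (simp add: gauss_laplace_def)
  moreover have "pi powr (?d / 2) > 0" by simp
  moreover have "\<gamma> powr (2 + ?d / 2) * (16 * gauss_laplace \<gamma> a * ?P) / pi powr (?d / 2)
      = (\<gamma> powr (2 + ?d / 2) * gauss_laplace \<gamma> a) * (16 * ?P) / pi powr (?d / 2)"
    by (simp only: mult.assoc mult.commute mult.left_commute)
  ultimately have "\<gamma> powr (2 + ?d / 2) * (16 * gauss_laplace \<gamma> a * ?P) / pi powr (?d / 2)
      = 16 * \<gamma>\<^sup>2 * ?E * ?P"
    by simp
  also have "\<dots> = scaled_pair_integral DIM('a) p ((norm a)\<^sup>2) \<gamma>"
    using assms by (simp add: scaled_pair_integral_def field_simps power2_eq_square)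
  finally show ?thesis .
qed

lemma scaled_test_stat_eq:
  fixes X :: "nat \<Rightarrow> real^'d"
  assumes "\<gamma> > 0"
  shows "\<gamma> powr (2 + real CARD('d) / 2) * (16 * test_stat n X \<gamma>) / (real n * pi powr (real CARD('d) / 2))
    = (1 / (real n)\<^sup>2) * (\<Sum>j=1..n. \<Sum>k=1..n. scaled_pair_integral CARD('d)
        (scaled_res n X j \<bullet> scaled_res n X k) ((norm (scaled_res n X j + scaled_res n X k))\<^sup>2) \<gamma>)"
proof -
  let ?d = "real CARD('d)" and ?Y = "scaled_res n X"
  have "\<gamma> powr (2 + ?d / 2) * (16 * test_stat n X \<gamma>) / (real n * pi powr (?d / 2))
    = (1 / (real n)\<^sup>2) * (\<Sum>j=1..n. \<Sum>k=1..n. \<gamma> powr (2 + ?d / 2)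
        * (16 * gauss_laplace \<gamma> (?Y j + ?Y k) * (?Y j \<bullet> ?Y k + (?d - (norm (?Y j + ?Y k))\<^sup>2) / (2 * \<gamma>)
          + (norm (?Y j + ?Y k))\<^sup>2 / (4 * \<gamma>\<^sup>2))) / pi powr (?d / 2))"
    unfolding test_stat_eq_double_sum[OF assms]
    by (simp add: sum_distrib_left sum_divide_distrib power2_eq_square ac_simps)
  then show ?thesis
    using scaled_gauss_laplace_quadratic_eq[OF assms, where 'a="real^'d"] by simp
qed

lemma tendsto_exp_times_quadratic_second_order:
  fixes c p B C :: real
  shows "((\<lambda>\<gamma>. 16 * \<gamma>\<^sup>2 * (exp (c / (4 * \<gamma>)) * (p + B / (4 * \<gamma>) + C / (16 * \<gamma>\<^sup>2)))
      - 16 * \<gamma>\<^sup>2 * p - 4 * \<gamma> * (p * c + B)) \<longlongrightarrow> p * c\<^sup>2 / 2 + B * c + C) at_top"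
proof -
  let ?f = "\<lambda>\<gamma>. 16 * \<gamma>\<^sup>2
    * (exp (c / (4 * \<gamma>)) * (p + B / (4 * \<gamma>) + C / (16 * \<gamma>\<^sup>2)) - p - (p * c + B) / (4 * \<gamma>))"
  have lim: "(?f \<longlongrightarrow> C + (c * B + c * (c * p) / 2)) at_top"
  proof (cases c "0 :: real" rule: linorder_cases)
    case equal
    have "\<forall>\<^sub>F \<gamma> in at_top. C = ?f \<gamma>"
      using eventually_gt_at_top[of 0] by eventually_elim (simp add: equal field_simps power2_eq_square)
    then show ?thesis using equal by (simp add: tendsto_cong[symmetric])
  qed real_asymp+
  have ev: "\<forall>\<^sub>F \<gamma> in at_top. ?f \<gamma> = 16 * \<gamma>\<^sup>2 * (exp (c / (4 * \<gamma>)) * (p + B / (4 * \<gamma>) + C / (16 * \<gamma>\<^sup>2)))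
      - 16 * \<gamma>\<^sup>2 * p - 4 * \<gamma> * (p * c + B)"
    using eventually_gt_at_top[of 0] by eventually_elim (simp add: field_simps power2_eq_square)
  have val: "C + (c * B + c * (c * p) / 2) = p * c\<^sup>2 / 2 + B * c + C"
    by (simp add: power2_eq_square algebra_simps)
  show ?thesis using tendsto_cong[OF ev] lim[unfolded val] by blast
qed

section \<open>Moments of the scaled residuals\<close>

lemma norm_add_sq: "(norm (a + b))\<^sup>2 = (norm a)\<^sup>2 + (norm b)\<^sup>2 + 2 * (a \<bullet> b)"
  for a b :: "'a::real_inner"
  by (simp add: power2_norm_eq_inner inner_add_left inner_add_right inner_commute)

lemma posdef_sample_cov_imp_pos:
  fixes X :: "nat \<Rightarrow> real^'d"
  assumes "posdef (sample_cov n X)"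
  shows "n > 0"
proof (rule ccontr)
  assume "\<not> n > 0"
  then have "sample_cov n X = 0" by (simp add: sample_cov_def)
  moreover have "(axis i 1 :: real^'d) \<noteq> 0" by (simp add: vec_eq_iff axis_def)
  ultimately show False using assms unfolding posdef_def by force
qed

context
  fixes n :: nat and X :: "nat \<Rightarrow> real^'d" and Y :: "nat \<Rightarrow> real^'d"
  defines Y_def: "Y \<equiv> scaled_res n X"
begin

lemma sum_scaled_res: "(\<Sum>j=1..n. Y j) = 0"
proof -
  have "(\<Sum>j=1..n. sample_mean n X) = real n *\<^sub>R sample_mean n X"
    by (simp only: real_vector.sum_constant_scale card_atLeastAtMost) simp
  then have "(\<Sum>j=1..n. X j - sample_mean n X) = 0"
    by (cases "n = 0") (simp_all add: sum_subtractf sample_mean_def)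
  then show ?thesis
    unfolding Y_def scaled_res_def matrix_vector_mult_sum_right[symmetric] by simp
qed

lemma sum_sum_inner_scaled_res_weighted:
  shows "(\<Sum>j=1..n. \<Sum>k=1..n. (Y j \<bullet> Y k) * g j) = 0"
    and "(\<Sum>j=1..n. \<Sum>k=1..n. (Y j \<bullet> Y k) * g k) = 0"
proof -
  have "(\<Sum>j=1..n. \<Sum>k=1..n. (Y j \<bullet> Y k) * g j)
      = (\<Sum>j=1..n. (Y j \<bullet> (\<Sum>k=1..n. Y k)) * g j)"
    by (simp add: inner_sum_right sum_distrib_right)
  then show "(\<Sum>j=1..n. \<Sum>k=1..n. (Y j \<bullet> Y k) * g j) = 0"
    by (simp only: sum_scaled_res) simp
  have "(\<Sum>j=1..n. \<Sum>k=1..n. (Y j \<bullet> Y k) * g k)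
      = (\<Sum>k=1..n. ((\<Sum>j=1..n. Y j) \<bullet> Y k) * g k)"
    by (subst sum.swap) (simp add: inner_sum_left sum_distrib_right)
  then show "(\<Sum>j=1..n. \<Sum>k=1..n. (Y j \<bullet> Y k) * g k) = 0"
    by (simp only: sum_scaled_res) simp
qed

context
  assumes S: "posdef (sample_cov n X)"
begin

lemma sum_inner_scaled_res_mult: "(\<Sum>j=1..n. (Y j \<bullet> v) * (Y j \<bullet> w)) = real n * (v \<bullet> w)"
proof -
  let ?R = "inv_sqrt (sample_cov n X)" and ?Z = "\<lambda>j. X j - sample_mean n X"
  have "sample_cov n X *v u = (1 / real n) *\<^sub>R (\<Sum>j=1..n. (?Z j \<bullet> u) *\<^sub>R ?Z j)" for u
    unfolding sample_cov_def scaleR_matrix_vector_assoc[symmetric] matrix_vector_mult_sum_left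
    by (simp add: outer_matrix_vector_mult)
  then have cov: "(\<Sum>j=1..n. (?Z j \<bullet> u) *\<^sub>R ?Z j) = real n *\<^sub>R (sample_cov n X *v u)" for u
    using posdef_sample_cov_imp_pos[OF S] by simp
  have "(\<Sum>j=1..n. (Y j \<bullet> v) *\<^sub>R Y j) = ?R *v (\<Sum>j=1..n. (?Z j \<bullet> (?R *v v)) *\<^sub>R ?Z j)"
    unfolding Y_def scaled_res_def matrix_vector_mult_sum_right
    by (simp add: matrix_vector_mult_scaleR symmetric_matrix_inner[OF symmetric_inv_sqrt[OF S]]
        inner_commute)
  also have "\<dots> = real n *\<^sub>R v"
    unfolding cov by (simp add: matrix_vector_mult_scaleR inv_sqrt_sandwich[OF S])
  finally have "(\<Sum>j=1..n. (Y j \<bullet> v) *\<^sub>R Y j) \<bullet> w = real n * (v \<bullet> w)" by simp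
  then show ?thesis by (simp add: inner_sum_left)
qed

lemma sum_norm_sq_scaled_res: "(\<Sum>j=1..n. (norm (Y j))\<^sup>2) = real n * CARD('d)"
proof -
  have "(\<Sum>j=1..n. (norm (Y j))\<^sup>2) = (\<Sum>b\<in>(Basis :: (real^'d) set). \<Sum>j=1..n. (Y j \<bullet> b) * (Y j \<bullet> b))"
    unfolding norm_sq_eq_sum_Basis unfolding power2_eq_square by (rule sum.swap)
  then show ?thesis by (simp only: sum_inner_scaled_res_mult) simp
qed

lemma sum_sum_inner_sq_scaled_res_weighted:
  "(\<Sum>j=1..n. \<Sum>k=1..n. (Y j \<bullet> Y k)\<^sup>2 * g j) = real n * (\<Sum>j=1..n. (norm (Y j))\<^sup>2 * g j)"
  "(\<Sum>j=1..n. \<Sum>k=1..n. (Y j \<bullet> Y k)\<^sup>2 * g k) = real n * (\<Sum>k=1..n. (norm (Y k))\<^sup>2 * g k)"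
proof -
  have inner_sq: "(\<Sum>k=1..n. (Y j \<bullet> Y k)\<^sup>2) = real n * (norm (Y j))\<^sup>2" for j
    using sum_inner_scaled_res_mult[of "Y j" "Y j"]
    unfolding power2_norm_eq_inner by (simp add: power2_eq_square inner_commute)
  show "(\<Sum>j=1..n. \<Sum>k=1..n. (Y j \<bullet> Y k)\<^sup>2 * g j) = real n * (\<Sum>j=1..n. (norm (Y j))\<^sup>2 * g j)"
    by (simp only: sum_distrib_right[symmetric] inner_sq sum_distrib_left mult.assoc)
  have "(\<Sum>j=1..n. \<Sum>k=1..n. (Y j \<bullet> Y k)\<^sup>2 * g k) = (\<Sum>k=1..n. \<Sum>j=1..n. (Y k \<bullet> Y j)\<^sup>2 * g k)"
    by (subst sum.swap) (simp only: inner_commute)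
  then show "(\<Sum>j=1..n. \<Sum>k=1..n. (Y j \<bullet> Y k)\<^sup>2 * g k) = real n * (\<Sum>k=1..n. (norm (Y k))\<^sup>2 * g k)"
    by (simp only: sum_distrib_right[symmetric] inner_sq sum_distrib_left mult.assoc)
qed

lemma sum_sum_first_order_coeff_eq_0:
  "(\<Sum>j=1..n. \<Sum>k=1..n. (Y j \<bullet> Y k) * (norm (Y j + Y k))\<^sup>2 + 2 * (CARD('d) - (norm (Y j + Y k))\<^sup>2)) = 0"
proof -
  let ?x = "\<lambda>j. (norm (Y j))\<^sup>2" and ?d = "real CARD('d)"
  have "(\<Sum>j=1..n. \<Sum>k=1..n. (Y j \<bullet> Y k) * (norm (Y j + Y k))\<^sup>2 + 2 * (?d - (norm (Y j + Y k))\<^sup>2))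
    = (\<Sum>j=1..n. \<Sum>k=1..n. (Y j \<bullet> Y k) * (?x j - 4)) + (\<Sum>j=1..n. \<Sum>k=1..n. (Y j \<bullet> Y k) * ?x k)
      + (\<Sum>j=1..n. \<Sum>k=1..n. (Y j \<bullet> Y k)\<^sup>2 * 2) + (\<Sum>j=1..n. \<Sum>k=1..n. 2 * ?d - 2 * ?x j - 2 * ?x k)"
    unfolding norm_add_sq by (simp add: sum.distrib[symmetric] algebra_simps power2_eq_square)
  also have "\<dots> = 0"
    unfolding sum_sum_inner_scaled_res_weighted sum_sum_inner_sq_scaled_res_weighted
    by (simp add: sum_subtractf sum.distrib sum_distrib_left[symmetric] sum_distrib_right[symmetric]
        sum_norm_sq_scaled_res[simplified])
  finally show ?thesis .
qed

lemma sum_sum_second_order_coeff_eq: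
  "(\<Sum>j=1..n. \<Sum>k=1..n. (Y j \<bullet> Y k) * ((norm (Y j + Y k))\<^sup>2)\<^sup>2 / 2
      + 2 * (CARD('d) - (norm (Y j + Y k))\<^sup>2) * (norm (Y j + Y k))\<^sup>2 + 4 * (norm (Y j + Y k))\<^sup>2)
    = (real n)\<^sup>2 * (2 * b1 n X + b1_tilde n X)"
proof -
  let ?x = "\<lambda>j. (norm (Y j))\<^sup>2" and ?d = "real CARD('d)"
  have "(\<Sum>j=1..n. \<Sum>k=1..n. (Y j \<bullet> Y k) * ((norm (Y j + Y k))\<^sup>2)\<^sup>2 / 2
      + 2 * (?d - (norm (Y j + Y k))\<^sup>2) * (norm (Y j + Y k))\<^sup>2 + 4 * (norm (Y j + Y k))\<^sup>2)
    = (\<Sum>j=1..n. \<Sum>k=1..n. (Y j \<bullet> Y k) * ((?x j)\<^sup>2 / 2 - 8 * ?x j + 4 * ?d + 8))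
      + (\<Sum>j=1..n. \<Sum>k=1..n. (Y j \<bullet> Y k) * ((?x k)\<^sup>2 / 2 - 8 * ?x k))
      + (\<Sum>j=1..n. \<Sum>k=1..n. (Y j \<bullet> Y k)\<^sup>2 * (2 * ?x j - 8))
      + (\<Sum>j=1..n. \<Sum>k=1..n. (Y j \<bullet> Y k)\<^sup>2 * (2 * ?x k))
      + (\<Sum>j=1..n. \<Sum>k=1..n. 2 * (Y j \<bullet> Y k) ^ 3 + (Y j \<bullet> Y k) * ?x j * ?x k)
      + (\<Sum>j=1..n. \<Sum>k=1..n. (2 * ?d + 4) * (?x j + ?x k) - 2 * (?x j)\<^sup>2 - 2 * (?x k)\<^sup>2 - 4 * ?x j * ?x k)"
  proof -
    have pair: "p * (xj + xk + 2 * p)\<^sup>2 / 2 + 2 * (d - (xj + xk + 2 * p)) * (xj + xk + 2 * p)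
          + 4 * (xj + xk + 2 * p)
        = p * (xj\<^sup>2 / 2 - 8 * xj + 4 * d + 8) + p * (xk\<^sup>2 / 2 - 8 * xk) + p\<^sup>2 * (2 * xj - 8) + p\<^sup>2 * (2 * xk)
          + (2 * p ^ 3 + p * xj * xk) + ((2 * d + 4) * (xj + xk) - 2 * xj\<^sup>2 - 2 * xk\<^sup>2 - 4 * xj * xk)"
      for p xj xk d :: real
      by (simp add: field_simps power2_eq_square power3_eq_cube)
    show ?thesis unfolding norm_add_sq pair by (simp only: sum.distrib)
  qed
  also have "\<dots> = (\<Sum>j=1..n. \<Sum>k=1..n. 2 * (Y j \<bullet> Y k) ^ 3 + (Y j \<bullet> Y k) * ?x j * ?x k)"
    unfolding sum_sum_inner_scaled_res_weighted sum_sum_inner_sq_scaled_res_weighted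
    by (simp add: sum_subtractf sum.distrib sum_distrib_left[symmetric] sum_distrib_right[symmetric]
        sum_product[symmetric] sum_norm_sq_scaled_res[simplified] algebra_simps)
  also have "\<dots> = (real n)\<^sup>2 * (2 * b1 n X + b1_tilde n X)"
  proof -
    have "(real n)\<^sup>2 * b1 n X = (\<Sum>j=1..n. \<Sum>k=1..n. (Y j \<bullet> Y k) ^ 3)"
      "(real n)\<^sup>2 * b1_tilde n X = (\<Sum>j=1..n. \<Sum>k=1..n. (Y j \<bullet> Y k) * ?x j * ?x k)"
      using posdef_sample_cov_imp_pos[OF S] by (simp_all add: b1_def b1_tilde_def Y_def)
    then show ?thesis by (simp add: sum.distrib sum_distrib_left[symmetric] algebra_simps)
  qed
  finally show ?thesis .
qed

text \<open>The terms of order \<open>\<gamma>\<^sup>2\<close> and \<open>\<gamma>\<close> cancel in the sum over all pairs.\<close>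

lemma scaled_test_stat_eq_remainder:
  assumes "\<gamma> > 0"
  shows "\<gamma> powr (2 + real CARD('d) / 2) * (16 * test_stat n X \<gamma>) / (real n * pi powr (real CARD('d) / 2))
    = (1 / (real n)\<^sup>2) * (\<Sum>j=1..n. \<Sum>k=1..n.
        scaled_pair_integral CARD('d) (Y j \<bullet> Y k) ((norm (Y j + Y k))\<^sup>2) \<gamma> - 16 * \<gamma>\<^sup>2 * (Y j \<bullet> Y k)
        - 4 * \<gamma> * ((Y j \<bullet> Y k) * (norm (Y j + Y k))\<^sup>2 + 2 * (CARD('d) - (norm (Y j + Y k))\<^sup>2)))"
proof -
  have "(\<Sum>j=1..n. \<Sum>k=1..n. (Y j \<bullet> Y k)) = 0"
    using sum_sum_inner_scaled_res_weighted(1)[of "\<lambda>_. 1"] by simp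
  then have "(\<Sum>j=1..n. \<Sum>k=1..n.
        scaled_pair_integral CARD('d) (Y j \<bullet> Y k) ((norm (Y j + Y k))\<^sup>2) \<gamma> - 16 * \<gamma>\<^sup>2 * (Y j \<bullet> Y k)
        - 4 * \<gamma> * ((Y j \<bullet> Y k) * (norm (Y j + Y k))\<^sup>2 + 2 * (CARD('d) - (norm (Y j + Y k))\<^sup>2)))
      = (\<Sum>j=1..n. \<Sum>k=1..n. scaled_pair_integral CARD('d) (Y j \<bullet> Y k) ((norm (Y j + Y k))\<^sup>2) \<gamma>)"
    unfolding sum_subtractf sum_distrib_left[symmetric] sum_sum_first_order_coeff_eq_0 by simp
  then show ?thesis unfolding Y_def by (simp only: scaled_test_stat_eq[OF assms])
qed

end

end

theorem mainTheorem8: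
  fixes X :: "nat \<Rightarrow> real^'d" and n :: nat
  assumes "n \<ge> CARD('d) + 1"
    and "posdef (sample_cov n X)"
  shows "((\<lambda>\<gamma>. \<gamma> powr (2 + real CARD('d) / 2) * (16 * test_stat n X \<gamma>)
              / (real n * pi powr (real CARD('d) / 2)))
          \<longlongrightarrow> 2 * b1 n X + b1_tilde n X) at_top"
proof -
  let ?Y = "scaled_res n X" and ?d = "real CARD('d)"
  let ?c = "\<lambda>j k. (norm (?Y j + ?Y k))\<^sup>2"
  have lim: "((\<lambda>\<gamma>. (1 / (real n)\<^sup>2) * (\<Sum>j=1..n. \<Sum>k=1..n.
      scaled_pair_integral ?d (?Y j \<bullet> ?Y k) (?c j k) \<gamma> - 16 * \<gamma>\<^sup>2 * (?Y j \<bullet> ?Y k)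
        - 4 * \<gamma> * ((?Y j \<bullet> ?Y k) * ?c j k + 2 * (?d - ?c j k))))
    \<longlongrightarrow> (1 / (real n)\<^sup>2) * (\<Sum>j=1..n. \<Sum>k=1..n.
      (?Y j \<bullet> ?Y k) * (?c j k)\<^sup>2 / 2 + 2 * (?d - ?c j k) * ?c j k + 4 * ?c j k)) at_top"
    unfolding scaled_pair_integral_def
    by (intro tendsto_mult tendsto_const tendsto_sum tendsto_exp_times_quadratic_second_order)
  have val: "(1 / (real n)\<^sup>2) * (\<Sum>j=1..n. \<Sum>k=1..n.
      (?Y j \<bullet> ?Y k) * (?c j k)\<^sup>2 / 2 + 2 * (?d - ?c j k) * ?c j k + 4 * ?c j k)
    = 2 * b1 n X + b1_tilde n X"
    using sum_sum_second_order_coeff_eq[OF assms(2)] posdef_sample_cov_imp_pos[OF assms(2)] by simp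
  have ev: "\<forall>\<^sub>F \<gamma> in at_top. (1 / (real n)\<^sup>2) * (\<Sum>j=1..n. \<Sum>k=1..n.
      scaled_pair_integral ?d (?Y j \<bullet> ?Y k) (?c j k) \<gamma> - 16 * \<gamma>\<^sup>2 * (?Y j \<bullet> ?Y k)
        - 4 * \<gamma> * ((?Y j \<bullet> ?Y k) * ?c j k + 2 * (?d - ?c j k)))
    = \<gamma> powr (2 + ?d / 2) * (16 * test_stat n X \<gamma>) / (real n * pi powr (?d / 2))"
    using eventually_gt_at_top[of 0]
    by eventually_elim (simp only: scaled_test_stat_eq_remainder[OF assms(2)])
  show ?thesis using tendsto_cong[OF ev] lim[unfolded val] by blast
qed

end
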